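(* Let $b = (b(0), \dots, b(L-1))$ be a solution of length $L$. Then $$b(0) \ge L - \frac{1}{2} - \sqrt{2L + \frac{1}{4}}.$$
   Context: A solution of length $L \ge 1$ is a sequence $(b(0), \dots, b(L-1))$ of integers with $0 \le b(i) < L$ such that for every $0 \le i < L$, $b(i) = |\{ j : 0 \le j < L,\ b(j) = i\}|$. *)

theory Defs
  imports Complex_Main
begin

text \<open>Values are natural numbers (nonnegative integers); entries outside {0..<L} are irrelevant.\<close>
definition is_solution :: "nat \<Rightarrow> (nat \<Rightarrow> nat) \<Rightarrow> bool" where
  "is_solution L b \<longleftrightarrow> L \<ge> 1 \<and> (\<forall>i<L. b i < L) \<and>
     (\<forall>i<L. b i = card {j. j < L \<and> b j = i})"

end

theory Submission
  imports Defs
begin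

text \<open>Double counting gives \<open>\<Sum>i<L. b i = L\<close> and \<open>\<Sum>i<L. i * b i = L\<close>. If \<open>m\<close> entries of
  \<open>b\<close> are nonzero, their \<open>m\<close> distinct positions sum to at least \<open>m(m-1)/2\<close> and at most
  \<open>\<Sum>i<L. i * b i = L\<close>, while \<open>b 0\<close> counts the zero entries, i.e. \<open>b 0 = L - m\<close>.
  Solving \<open>m(m-1) \<le> 2L\<close> for \<open>m\<close> gives the bound.\<close>

lemma card_times_pred_le_twice_sum:
  fixes S :: "nat set"
  assumes "finite S"
  shows "card S * (card S - 1) \<le> 2 * \<Sum>S"
  using assms
proof (induction "card S" arbitrary: S)
  case 0
  then show ?case by simp
next
  case (Suc n)
  define M where "M = Max S"
  have "S \<noteq> {}" using Suc.hyps(2) by auto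
  then have "M \<in> S" using Suc.prems by (simp add: M_def)
  then have card_rest: "card (S - {M}) = n" using Suc.hyps(2) Suc.prems by simp
  have IH: "n * (n - 1) \<le> 2 * \<Sum>(S - {M})"
    using Suc.hyps(1)[of "S - {M}"] card_rest Suc.prems by simp
  have "S \<subseteq> {..M}" using Suc.prems by (auto simp: M_def)
  then have "n \<le> M" using card_mono[of "{..M}" S] Suc.hyps(2) by simp
  have "\<Sum>S = M + \<Sum>(S - {M})" using Suc.prems \<open>M \<in> S\<close> by (simp add: sum.remove)
  then show ?case using IH \<open>n \<le> M\<close> Suc.hyps(2)[symmetric]
    by (cases n) (auto simp: algebra_simps)
qed

lemma sum_times_card_fiber:
  fixes g :: "'b \<Rightarrow> 'c::comm_semiring_1"
  assumes "finite A" "finite B" "f ` A \<subseteq> B"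
  shows "(\<Sum>i\<in>B. g i * of_nat (card {j\<in>A. f j = i})) = (\<Sum>j\<in>A. g (f j))"
proof -
  have "(\<Sum>i\<in>B. g i * of_nat (card {j\<in>A. f j = i})) = (\<Sum>i\<in>B. \<Sum>j\<in>{j\<in>A. f j = i}. g (f j))"
    by (rule sum.cong) (auto simp: mult.commute)
  also have "\<dots> = (\<Sum>j\<in>A. g (f j))"
    by (rule sum.group[OF assms])
  finally show ?thesis .
qed

lemma is_solutionD:
  assumes "is_solution L b"
  shows "L \<ge> 1" "b ` {..<L} \<subseteq> {..<L}" "\<And>i. i < L \<Longrightarrow> b i = card {j\<in>{..<L}. b j = i}"
  using assms unfolding is_solution_def by auto

lemma solution_sum_weighted:
  fixes g :: "nat \<Rightarrow> nat"
  assumes "is_solution L b"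
  shows "(\<Sum>i<L. g i * b i) = (\<Sum>j<L. g (b j))"
proof -
  have "(\<Sum>i<L. g i * b i) = (\<Sum>i<L. g i * card {j\<in>{..<L}. b j = i})"
    using is_solutionD(3)[OF assms] by simp
  also have "\<dots> = (\<Sum>j<L. g (b j))"
    using sum_times_card_fiber[of "{..<L}" "{..<L}" b g] is_solutionD(2)[OF assms] by simp
  finally show ?thesis .
qed

lemma solution_sum_eq:
  assumes "is_solution L b"
  shows "(\<Sum>i<L. b i) = L"
  using solution_sum_weighted[OF assms, of "\<lambda>_. 1"] by simp

lemma solution_moment_eq:
  assumes "is_solution L b"
  shows "(\<Sum>i<L. i * b i) = L"
  using solution_sum_weighted[OF assms, of id] solution_sum_eq[OF assms] by simp

lemma solution_sum_support_le:
  assumes "is_solution L b"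
  shows "\<Sum>{i\<in>{..<L}. b i \<noteq> 0} \<le> L"
proof -
  have "\<Sum>{i\<in>{..<L}. b i \<noteq> 0} \<le> (\<Sum>i\<in>{i\<in>{..<L}. b i \<noteq> 0}. i * b i)"
    by (rule sum_mono) auto
  also have "\<dots> \<le> (\<Sum>i<L. i * b i)"
    by (rule sum_mono2) auto
  finally show ?thesis using solution_moment_eq[OF assms] by simp
qed

lemma solution_first_plus_card_support:
  assumes "is_solution L b"
  shows "b 0 + card {i\<in>{..<L}. b i \<noteq> 0} = L"
proof -
  have "b 0 = card {i\<in>{..<L}. b i = 0}"
    using is_solutionD(1,3)[OF assms] by simp
  also have "\<dots> + card {i\<in>{..<L}. b i \<noteq> 0} = card ({i\<in>{..<L}. b i = 0} \<union> {i\<in>{..<L}. b i \<noteq> 0})"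
    by (rule card_Un_disjoint[symmetric]) auto
  also have "{i\<in>{..<L}. b i = 0} \<union> {i\<in>{..<L}. b i \<noteq> 0} = {..<L}" by auto
  finally show ?thesis by simp
qed

lemma times_pred_le_imp_le_sqrt:
  fixes x c :: real
  assumes "x * (x - 1) \<le> c"
  shows "x \<le> 1/2 + sqrt (c + 1/4)"
proof -
  have "(x - 1/2)\<^sup>2 \<le> c + 1/4" using assms by (simp add: power2_eq_square algebra_simps)
  then have "\<bar>x - 1/2\<bar> \<le> sqrt (c + 1/4)" using real_le_rsqrt real_sqrt_abs
    by (metis real_sqrt_le_mono)
  then show ?thesis by linarith
qed

theorem mainTheorem5:
  fixes L :: nat and b :: "nat \<Rightarrow> nat"
  assumes "is_solution L b"
  shows "real (b 0) \<ge> real L - 1/2 - sqrt (2 * real L + 1/4)"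
proof -
  define m where "m = card {i\<in>{..<L}. b i \<noteq> 0}"
  have "m * (m - 1) \<le> 2 * L"
    using card_times_pred_le_twice_sum[of "{i\<in>{..<L}. b i \<noteq> 0}"]
      solution_sum_support_le[OF assms] unfolding m_def by simp
  then have "real (m * (m - 1)) \<le> real (2 * L)"
    by (simp only: of_nat_le_iff)
  then have "real m * (real m - 1) \<le> 2 * real L"
    by (cases m) (simp_all add: algebra_simps)
  then have "real m \<le> 1/2 + sqrt (2 * real L + 1/4)"
    by (rule times_pred_le_imp_le_sqrt)
  moreover have "real (b 0) = real L - real m"
    using solution_first_plus_card_support[OF assms] unfolding m_def by linarith
  ultimately show ?thesis by linarith
qed

end
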